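(* Let $G$ be a connected unicyclic graph with largest vertex degree $\Delta=3$ and let $\alpha\in(0,1)$. If $k(G)=3$ and $\alpha>\frac{-\gamma_0}{2-\gamma_0}$, or if $k(G)=2$ and $\alpha>\frac{-\delta_0}{2-\delta_0}$, then \[ \rho(A_\alpha(G))<3\alpha+2(1-\alpha)\sqrt{2}\cos\frac{\pi}{2k(G)+1}. \]
   Context: $A_\alpha(G)=\alpha D(G)+(1-\alpha)A(G)$ ($D$ degree matrix, $A$ adjacency matrix), and $\rho(M)$ is the spectral radius (largest eigenvalue) of a symmetric matrix $M$. A unicyclic graph is a connected graph with exactly one cycle; if $C_r$ is its cycle with vertices $v_1,\dots,v_r$, removing the cycle edges leaves trees $T_1,\dots,T_r$ rooted at $v_1,\dots,v_r$, $h(T_i)$ is the largest distance from $v_i$ to a vertex of $T_i$, and $k(G)=\max_i h(T_i)+1$. Let $Z(\gamma)=\begin{pmatrix}\gamma&\sqrt2&0\\ \sqrt2&0&1\\ 0&1&2\end{pmatrix}$ and $W(\delta)=\begin{pmatrix}\delta&1\\1&2\end{pmatrix}$. $\gamma_0$ is the unique real number (it lies in $(-0.25,-0.2)$) with $\rho(Z(\gamma_0))=2\sqrt2\cos\frac{\pi}{7}$, and $\delta_0$ is the unique real number (it lies in $(-1.2,-1.1)$) with $\rho(W(\delta_0))=2\sqrt2\cos\frac{\pi}{5}$. *)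

theory Defs
  imports "HOL-Analysis.Analysis"
begin

definition simple_graph :: "('a \<Rightarrow> 'a \<Rightarrow> bool) \<Rightarrow> bool" where
  "simple_graph E \<longleftrightarrow> (\<forall>x y. E x y \<longrightarrow> E y x) \<and> (\<forall>x. \<not> E x x)"

fun walk :: "('a \<Rightarrow> 'a \<Rightarrow> bool) \<Rightarrow> 'a list \<Rightarrow> bool" where
  "walk E [] = False"
| "walk E [x] = True"
| "walk E (x # y # xs) = (E x y \<and> walk E (y # xs))"

definition reachable :: "('a \<Rightarrow> 'a \<Rightarrow> bool) \<Rightarrow> 'a \<Rightarrow> 'a \<Rightarrow> bool" where
  "reachable E u v \<longleftrightarrow> (\<exists>xs. walk E xs \<and> hd xs = u \<and> last xs = v)"

definition gdist :: "('a \<Rightarrow> 'a \<Rightarrow> bool) \<Rightarrow> 'a \<Rightarrow> 'a \<Rightarrow> nat" where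
  "gdist E u v = (LEAST n. \<exists>xs. walk E xs \<and> hd xs = u \<and> last xs = v \<and> length xs = n + 1)"

definition connected_graph :: "('a \<Rightarrow> 'a \<Rightarrow> bool) \<Rightarrow> bool" where
  "connected_graph E \<longleftrightarrow> (\<forall>u v. reachable E u v)"

definition is_cycle :: "('a \<Rightarrow> 'a \<Rightarrow> bool) \<Rightarrow> 'a list \<Rightarrow> bool" where
  "is_cycle E C \<longleftrightarrow> distinct C \<and> length C \<ge> 3 \<and>
     (\<forall>i < length C. E (C ! i) (C ! ((i + 1) mod length C)))"

definition cycle_edge :: "'a list \<Rightarrow> 'a \<Rightarrow> 'a \<Rightarrow> bool" where
  "cycle_edge C x y \<longleftrightarrow> (\<exists>i < length C. {x, y} = {C ! i, C ! ((i + 1) mod length C)})"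

definition unicyclic :: "('a \<Rightarrow> 'a \<Rightarrow> bool) \<Rightarrow> bool" where
  "unicyclic E \<longleftrightarrow> connected_graph E \<and> (\<exists>C. is_cycle E C) \<and>
     (\<forall>C D. is_cycle E C \<and> is_cycle E D \<longrightarrow> {(x,y). cycle_edge C x y} = {(x,y). cycle_edge D x y})"

definition remove_cycle :: "('a \<Rightarrow> 'a \<Rightarrow> bool) \<Rightarrow> 'a list \<Rightarrow> 'a \<Rightarrow> 'a \<Rightarrow> bool" where
  "remove_cycle E C x y \<longleftrightarrow> E x y \<and> \<not> cycle_edge C x y"

text \<open>k(G) = max_i h(T_i) + 1, where h(T_i) is the largest distance from v_i to a vertex of T_i
  (T_i = component of v_i after removing the cycle edges).\<close>
definition k_of :: "('a \<Rightarrow> 'a \<Rightarrow> bool) \<Rightarrow> 'a list \<Rightarrow> nat" where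
  "k_of E C = Max {gdist (remove_cycle E C) v u | v u. v \<in> set C \<and> reachable (remove_cycle E C) v u} + 1"

definition kG :: "('a \<Rightarrow> 'a \<Rightarrow> bool) \<Rightarrow> nat" where
  "kG E = k_of E (SOME C. is_cycle E C)"

definition degree :: "('a::finite \<Rightarrow> 'a \<Rightarrow> bool) \<Rightarrow> 'a \<Rightarrow> nat" where
  "degree E v = card {u. E v u}"

definition max_degree :: "('a::finite \<Rightarrow> 'a \<Rightarrow> bool) \<Rightarrow> nat" where
  "max_degree E = Max (range (degree E))"

definition adj_matrix :: "('a::finite \<Rightarrow> 'a \<Rightarrow> bool) \<Rightarrow> real^'a^'a" where
  "adj_matrix E = (\<chi> i j. if E i j then 1 else 0)"

definition deg_matrix :: "('a::finite \<Rightarrow> 'a \<Rightarrow> bool) \<Rightarrow> real^'a^'a" where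
  "deg_matrix E = (\<chi> i j. if i = j then real (degree E i) else 0)"

definition A_alpha :: "real \<Rightarrow> ('a::finite \<Rightarrow> 'a \<Rightarrow> bool) \<Rightarrow> real^'a^'a" where
  "A_alpha \<alpha> E = \<alpha> *\<^sub>R deg_matrix E + (1 - \<alpha>) *\<^sub>R adj_matrix E"

text \<open>Spectral radius of a symmetric real matrix = its largest (real) eigenvalue.\<close>
definition rho :: "real^'n^'n \<Rightarrow> real" where
  "rho M = Max {l. \<exists>v. v \<noteq> 0 \<and> M *v v = l *\<^sub>R v}"

definition Zmat :: "real \<Rightarrow> real^3^3" where
  "Zmat \<gamma> = vector [vector [\<gamma>, sqrt 2, 0], vector [sqrt 2, 0, 1], vector [0, 1, 2]]"

definition Wmat :: "real \<Rightarrow> real^2^2" where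
  "Wmat \<delta> = vector [vector [\<delta>, 1], vector [1, 2]]"

definition gamma0 :: real where
  "gamma0 = (THE \<gamma>. rho (Zmat \<gamma>) = 2 * sqrt 2 * cos (pi / 7))"

definition delta0 :: real where
  "delta0 = (THE \<delta>. rho (Wmat \<delta>) = 2 * sqrt 2 * cos (pi / 5))"

end

theory Submission
  imports Defs
begin

text \<open>By Collatz--Wielandt, \<open>\<rho>(M) < b\<close> for a nonnegative symmetric \<open>M\<close> as soon as some positive
  vector \<open>x\<close> satisfies \<open>(M x)\<^sub>v < b x\<^sub>v\<close> for every \<open>v\<close>. Take \<open>x\<^sub>v = f(depth v)\<close>, where the depth is the
  distance to the cycle in the forest left after deleting the cycle edges. A cycle vertex has at most
  two neighbours on the cycle and the others at depth 1; a vertex of depth \<open>j \<ge> 1\<close> has at most one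
  neighbour of depth \<open>\<le> j\<close> (two would close a second cycle) and the others at depth \<open>j + 1\<close>, none of
  them if \<open>j = k(G) - 1\<close>. With \<open>\<Delta> = 3\<close> the row inequalities reduce to three conditions on \<open>f\<close>.
  For \<open>b = 3\<alpha> + (1 - \<alpha>) t\<close> with \<open>t = 2\<surd>2 cos(\<pi>/(2k+1))\<close>, the sequence built from the eigenvector
  of \<open>Z(\<gamma>\<^sub>0)\<close> resp. \<open>W(\<delta>\<^sub>0)\<close> for \<open>t\<close> satisfies the cycle and inner rows with equality, and the leaf
  row strictly precisely when \<open>\<alpha>\<close> exceeds the threshold; decreasing \<open>t\<close> slightly in \<open>f\<close> then makes
  all rows strict.\<close>

section \<open>Walks and cycles\<close>

lemma walk_not_Nil: "walk E xs \<Longrightarrow> xs \<noteq> []"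
  by (cases xs) auto

lemma walk_Cons_iff: "walk E (x # xs) \<longleftrightarrow> xs = [] \<or> (E x (hd xs) \<and> walk E xs)"
  by (cases xs) auto

lemma walk_snoc_iff: "walk E (xs @ [y]) \<longleftrightarrow> xs = [] \<or> (walk E xs \<and> E (last xs) y)"
  by (induction xs) (auto simp: walk_Cons_iff)

lemma walk_append_Cons_iff: "walk E (xs @ y # ys) \<longleftrightarrow> walk E (xs @ [y]) \<and> walk E (y # ys)"
  by (induction xs) (auto simp: walk_Cons_iff hd_append)

lemma walk_iff_nth:
  "walk E xs \<longleftrightarrow> xs \<noteq> [] \<and> (\<forall>i. Suc i < length xs \<longrightarrow> E (xs ! i) (xs ! Suc i))"
proof (induction xs)
  case (Cons x xs)
  then show ?case
    by (cases xs) (auto simp: nth_Cons split: nat.splits)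
qed simp

lemma walk_take: "walk E xs \<Longrightarrow> 0 < n \<Longrightarrow> walk E (take n xs)"
  by (auto simp: walk_iff_nth)

lemma walk_mono:
  "walk E xs \<Longrightarrow> (\<And>x y. x \<in> set xs \<Longrightarrow> y \<in> set xs \<Longrightarrow> E x y \<Longrightarrow> E' x y) \<Longrightarrow> walk E' xs"
  by (induction E xs rule: walk.induct) auto

lemma walk_join:
  assumes "walk E xs" "walk E ys" "last xs = hd ys"
  shows "walk E (xs @ tl ys)" "hd (xs @ tl ys) = hd xs" "last (xs @ tl ys) = last ys"
    "set (xs @ tl ys) \<subseteq> set xs \<union> set ys"
proof -
  obtain y ys' where ys: "ys = y # ys'"
    using walk_not_Nil[OF assms(2)] by (cases ys) auto
  obtain xs' where xs: "xs = xs' @ [y]"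
    using walk_not_Nil[OF assms(1)] assms(3) ys by (metis append_butlast_last_id list.sel(1))
  show "walk E (xs @ tl ys)"
    using walk_append_Cons_iff[of E xs' y ys'] assms(1,2) xs ys by simp
  show "hd (xs @ tl ys) = hd xs" "last (xs @ tl ys) = last ys" "set (xs @ tl ys) \<subseteq> set xs \<union> set ys"
    using xs ys by (auto simp: hd_append)
qed

lemma walk_rev: "(\<And>x y. E x y \<Longrightarrow> E y x) \<Longrightarrow> walk E xs \<Longrightarrow> walk E (rev xs)"
proof (induction xs)
  case (Cons x xs)
  then show ?case
    by (cases "xs = []") (auto simp: walk_Cons_iff walk_snoc_iff last_rev)
qed simp

lemma walk_remdups:
  "walk E xs \<Longrightarrow> \<exists>ys. walk E ys \<and> hd ys = hd xs \<and> last ys = last xs \<and> distinct ys \<and> set ys \<subseteq> set xs"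
proof (induction "length xs" arbitrary: xs rule: less_induct)
  case less
  show ?case
  proof (cases "distinct xs")
    case True
    then show ?thesis using less by blast
  next
    case False
    then obtain a y b c where xs: "xs = a @ [y] @ b @ [y] @ c"
      using not_distinct_decomp by blast
    let ?zs = "a @ [y] @ c"
    have "walk E (a @ [y])" "walk E (y # b @ [y] @ c)"
      using less.prems xs walk_append_Cons_iff[of E a y "b @ [y] @ c"] by auto
    then have "walk E ?zs"
      using walk_append_Cons_iff[of E "y # b" y c] walk_append_Cons_iff[of E a y c] by auto
    moreover have "length ?zs < length xs" using xs by simp
    ultimately obtain ys where ys: "walk E ys" "hd ys = hd ?zs" "last ys = last ?zs" "distinct ys"
      "set ys \<subseteq> set ?zs"
      using less.hyps by blast
    have "hd ?zs = hd xs" "last ?zs = last xs" "set ?zs \<subseteq> set xs"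
      using xs by (auto simp: hd_append)
    with ys show ?thesis by (intro exI[of _ ys]) auto
  qed
qed

lemma cycle_edge_sym: "cycle_edge C a b \<Longrightarrow> cycle_edge C b a"
  unfolding cycle_edge_def by (simp add: insert_commute)

lemma cycle_edge_in_set: "cycle_edge C a b \<Longrightarrow> a \<in> set C \<and> b \<in> set C"
proof -
  assume "cycle_edge C a b"
  then obtain i where i: "i < length C" "{a, b} = {C ! i, C ! ((i + 1) mod length C)}"
    unfolding cycle_edge_def by blast
  then have "0 < length C" by linarith
  then have "C ! i \<in> set C" "C ! ((i + 1) mod length C) \<in> set C" using i(1) by auto
  then show ?thesis using i(2) by (auto simp: doubleton_eq_iff)
qed

lemma cycle_edge_adjacent:
  assumes "simple_graph E" "is_cycle E C" "cycle_edge C a b"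
  shows "E a b"
  using assms unfolding simple_graph_def is_cycle_def cycle_edge_def
  by (auto simp: doubleton_eq_iff)

lemma cycle_through_edge:
  assumes "simple_graph E" "E a b"
    and "walk (\<lambda>x y. E x y \<and> {x, y} \<noteq> {a, b}) ws" "hd ws = b" "last ws = a"
  shows "\<exists>D. is_cycle E D \<and> cycle_edge D a b"
proof -
  obtain ds where ds: "walk (\<lambda>x y. E x y \<and> {x, y} \<noteq> {a, b}) ds" "hd ds = b" "last ds = a"
    "distinct ds"
    using walk_remdups[OF assms(3)] assms(4,5) by auto
  define n where "n = length ds"
  have "ds \<noteq> []" using walk_not_Nil ds(1) by blast
  have "a \<noteq> b" using assms(1,2) unfolding simple_graph_def by auto
  have "n \<noteq> 1"
    using ds(2,3) \<open>a \<noteq> b\<close> by (auto simp: n_def length_Suc_conv)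
  moreover have "n \<noteq> 2"
    using ds(1-3) by (auto simp: n_def length_Suc_conv numeral_2_eq_2 insert_commute)
  moreover have "0 < n" using \<open>ds \<noteq> []\<close> by (simp add: n_def)
  ultimately have n3: "3 \<le> n" by linarith
  have first: "ds ! 0 = b" and final: "ds ! (n - 1) = a"
    using ds(2,3) \<open>ds \<noteq> []\<close> by (simp_all add: hd_conv_nth last_conv_nth n_def)
  have wrap: "(n - 1 + 1) mod n = 0" using n3 by simp
  have "is_cycle E ds"
    unfolding is_cycle_def
  proof (intro conjI allI impI)
    fix i assume i: "i < length ds"
    show "E (ds ! i) (ds ! ((i + 1) mod length ds))"
    proof (cases "Suc i < n")
      case True
      then show ?thesis using ds(1) by (simp add: walk_iff_nth n_def)
    next
      case False
      then have "i = n - 1" using i n_def by simp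
      then show ?thesis using first final wrap assms(2) n_def by simp
    qed
  qed (use ds(4) n3 n_def in auto)
  moreover have "cycle_edge ds a b"
    unfolding cycle_edge_def using first final wrap n3 n_def
    by (intro exI[of _ "n - 1"]) auto
  ultimately show ?thesis by blast
qed

lemma cycle_walk_prefix:
  assumes "j < length C"
  shows "walk (cycle_edge C) (map ((!) C) [0..<Suc j])"
  unfolding walk_iff_nth
proof (intro conjI allI impI)
  fix i assume "Suc i < length (map ((!) C) [0..<Suc j])"
  then have i: "Suc i \<le> j" by simp
  then have "(i + 1) mod length C = Suc i" using assms by simp
  then have "cycle_edge C (C ! i) (C ! Suc i)"
    unfolding cycle_edge_def using i assms by (intro exI[of _ i]) auto
  then show "cycle_edge C (map ((!) C) [0..<Suc j] ! i) (map ((!) C) [0..<Suc j] ! Suc i)"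
    using i by (simp del: upt_Suc add: nth_append)
qed simp

lemma cycle_walk:
  assumes "u \<in> set C" "w \<in> set C"
  shows "\<exists>ws. walk (cycle_edge C) ws \<and> hd ws = u \<and> last ws = w \<and> set ws \<subseteq> set C"
proof -
  obtain i j where i: "i < length C" "u = C ! i" and j: "j < length C" "w = C ! j"
    using assms by (metis in_set_conv_nth)
  define wi where "wi = rev (map ((!) C) [0..<Suc i])"
  define wj where "wj = map ((!) C) [0..<Suc j]"
  have "walk (cycle_edge C) wi"
    using walk_rev[OF cycle_edge_sym cycle_walk_prefix[OF i(1)]] by (simp add: wi_def)
  moreover have "walk (cycle_edge C) wj" using cycle_walk_prefix[OF j(1)] by (simp add: wj_def)
  moreover have "last wi = hd wj"
    by (simp add: wi_def wj_def last_rev upt_conv_Cons del: upt_Suc)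
  moreover have "hd wi = u" "last wj = w" "set wi \<union> set wj \<subseteq> set C"
    using i j by (auto simp: wi_def wj_def hd_rev)
  ultimately show ?thesis
    using walk_join[of "cycle_edge C" wi wj] by (intro exI[of _ "wi @ tl wj"]) auto
qed

section \<open>Eigenvalues of symmetric matrices\<close>

definition eigenvalues :: "real^'n^'n \<Rightarrow> real set" where
  "eigenvalues M = {l. \<exists>v. v \<noteq> 0 \<and> M *v v = l *\<^sub>R v}"

definition symmetric_matrix :: "real^'n^'n \<Rightarrow> bool" where
  "symmetric_matrix M \<longleftrightarrow> transpose M = M"

lemma rho_eq_Max_eigenvalues: "rho M = Max (eigenvalues M)"
  by (simp add: rho_def eigenvalues_def)

lemma symmetric_matrix_inner:
  "symmetric_matrix M \<Longrightarrow> inner (M *v x) y = inner x (M *v y)"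
  by (metis dot_lmul_matrix symmetric_matrix_def vector_transpose_matrix)

lemma finite_eigenvalues:
  fixes M :: "real^'n^'n"
  assumes "symmetric_matrix M"
  shows "finite (eigenvalues M)"
proof -
  define ev where "ev l = (SOME v. v \<noteq> 0 \<and> M *v v = l *\<^sub>R v)" for l
  have ev: "ev l \<noteq> 0 \<and> M *v ev l = l *\<^sub>R ev l" if "l \<in> eigenvalues M" for l
    using that unfolding eigenvalues_def ev_def by (metis (mono_tags, lifting) mem_Collect_eq someI)
  have inj: "inj_on ev (eigenvalues M)"
    by (rule inj_onI) (metis ev scaleR_cancel_right)
  have "pairwise orthogonal (ev ` eigenvalues M)"
    unfolding pairwise_def
  proof clarify
    fix l m assume lm: "l \<in> eigenvalues M" "m \<in> eigenvalues M" "ev l \<noteq> ev m"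
    have "l * inner (ev l) (ev m) = inner (M *v ev l) (ev m)" using ev[OF lm(1)] by simp
    also have "\<dots> = inner (ev l) (M *v ev m)" by (rule symmetric_matrix_inner[OF assms])
    also have "\<dots> = m * inner (ev l) (ev m)" using ev[OF lm(2)] by simp
    finally have "(l - m) * inner (ev l) (ev m) = 0" by (simp add: algebra_simps)
    with lm(3) show "orthogonal (ev l) (ev m)" by (auto simp: orthogonal_def)
  qed
  moreover have "0 \<notin> ev ` eigenvalues M" using ev by auto
  ultimately have "finite (ev ` eigenvalues M)"
    using pairwise_orthogonal_independent independent_bound by blast
  then show ?thesis using finite_imageD[OF _ inj] by blast
qed

lemma nonneg_quadratic_linear_coeff:
  fixes a b :: real
  assumes "\<And>t. 0 \<le> 2 * t * a + t\<^sup>2 * b" "0 \<le> a" "0 \<le> b"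
  shows "a = 0"
proof (rule ccontr)
  assume "a \<noteq> 0"
  define t where "t = - a / (b + 1)"
  have tb: "t * (b + 1) = - a" using assms(3) by (simp add: t_def)
  have "(b + 1)\<^sup>2 * (2 * t * a + t\<^sup>2 * b) = 2 * a * (t * (b + 1)) * (b + 1) + (t * (b + 1))\<^sup>2 * b"
    by (simp add: power2_eq_square algebra_simps)
  also have "\<dots> = 2 * a * (- a) * (b + 1) + (- a)\<^sup>2 * b" by (simp only: tb)
  also have "\<dots> = - a\<^sup>2 * (b + 2)" by (simp add: power2_eq_square algebra_simps)
  also have "\<dots> < 0" using \<open>a \<noteq> 0\<close> assms(3) by (simp add: mult_pos_pos)
  finally show False using assms(1)[of t] assms(3) by (simp add: mult_less_0_iff)
qed

text \<open>\<open>\<lambda> I - M\<close> is positive semidefinite with \<open>x\<close> in its null cone, hence \<open>x\<close> is in its kernel.\<close>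

lemma rayleigh_maximiser_eigenvector:
  fixes M :: "real^'n^'n"
  assumes "symmetric_matrix M" "\<And>y. inner y (M *v y) \<le> l * inner y y" "inner x (M *v x) = l * inner x x"
  shows "M *v x = l *\<^sub>R x"
proof -
  define q where "q y = l * inner y y - inner y (M *v y)" for y
  define w where "w = l *\<^sub>R x - M *v x"
  have q_nonneg: "0 \<le> q y" for y using assms(2)[of y] by (simp add: q_def)
  have q_shift: "q (x + t *\<^sub>R w) = q x + 2 * t * inner w w + t\<^sup>2 * q w" for t
    using symmetric_matrix_inner[OF assms(1), of x w]
    by (simp add: q_def w_def matrix_vector_right_distrib matrix_vector_mult_scaleR inner_add_left
        inner_add_right inner_diff_left inner_diff_right inner_commute power2_eq_square algebra_simps)
  have "q x = 0" using assms(3) by (simp add: q_def)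
  then have "0 \<le> 2 * t * inner w w + t\<^sup>2 * q w" for t
    using q_shift[of t] q_nonneg[of "x + t *\<^sub>R w"] by simp
  then have "inner w w = 0"
    using q_nonneg[of w] by (intro nonneg_quadratic_linear_coeff) auto
  then show ?thesis by (simp add: w_def)
qed

lemma eigenvalues_nonempty:
  fixes M :: "real^'n^'n"
  assumes "symmetric_matrix M"
  shows "eigenvalues M \<noteq> {}"
proof -
  define Q where "Q x = inner x (M *v x)" for x :: "real^'n"
  have "continuous_on (sphere 0 1) Q" unfolding Q_def by (intro continuous_intros)
  moreover have "sphere (0::real^'n) 1 \<noteq> {}"
    using norm_axis_1[of undefined] by (metis empty_iff mem_sphere_0)
  ultimately obtain x where x: "x \<in> sphere 0 1" and max: "\<And>y. y \<in> sphere 0 1 \<Longrightarrow> Q y \<le> Q x"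
    using continuous_attains_sup[OF compact_sphere] by blast
  have "Q y \<le> Q x * inner y y" for y
  proof (cases "y = 0")
    case False
    then have "Q ((1 / norm y) *\<^sub>R y) \<le> Q x" by (intro max) simp
    then show ?thesis
      using False by (simp add: Q_def matrix_vector_mult_scaleR dot_square_norm field_simps power2_eq_square)
  qed (simp add: Q_def)
  moreover have "Q x = Q x * inner x x" using x by (simp add: dot_square_norm)
  ultimately have "M *v x = Q x *\<^sub>R x"
    by (intro rayleigh_maximiser_eigenvector[OF assms]) (simp_all add: Q_def)
  moreover have "x \<noteq> 0" using x by auto
  ultimately show ?thesis unfolding eigenvalues_def by blast
qed

lemma rho_in_eigenvalues: "symmetric_matrix M \<Longrightarrow> rho M \<in> eigenvalues M"
  unfolding rho_eq_Max_eigenvalues by (rule Max_in[OF finite_eigenvalues eigenvalues_nonempty])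

lemma rho_eqI:
  "symmetric_matrix M \<Longrightarrow> c \<in> eigenvalues M \<Longrightarrow> (\<And>l. l \<in> eigenvalues M \<Longrightarrow> l \<le> c) \<Longrightarrow> rho M = c"
  unfolding rho_eq_Max_eigenvalues by (rule Max_eqI[OF finite_eigenvalues])

text \<open>Collatz--Wielandt: compare an eigenvector \<open>v\<close> with \<open>x\<close> at a coordinate where \<open>|v\<^sub>i| / x\<^sub>i\<close>
  is maximal.\<close>

lemma abs_eigenvalue_less:
  fixes M :: "real^'n^'n"
  assumes nonneg: "\<And>i j. 0 \<le> M $ i $ j" and pos: "\<And>i. 0 < x $ i"
    and sub: "\<And>i. (M *v x) $ i < b * x $ i" and l: "l \<in> eigenvalues M"
  shows "\<bar>l\<bar> < b"
proof -
  obtain v where v: "v \<noteq> 0" "M *v v = l *\<^sub>R v" using l unfolding eigenvalues_def by blast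
  define r where "r i = \<bar>v $ i\<bar> / x $ i" for i
  have "Max (range r) \<in> range r" by (rule Max_in) auto
  then obtain i where "r i = Max (range r)" by (metis rangeE)
  then have i: "r j \<le> r i" for j by simp
  obtain j where "v $ j \<noteq> 0" using v(1) by (metis vec_eq_iff zero_index)
  then have "0 < r j" using pos[of j] by (simp add: r_def)
  then have "0 < r i" using i[of j] by linarith
  have v_le: "\<bar>v $ j\<bar> \<le> r i * x $ j" for j
    using i[of j] pos[of j] by (simp add: r_def divide_le_eq)
  have v_eq: "\<bar>v $ i\<bar> = r i * x $ i" using pos[of i] by (simp add: r_def)
  have "\<bar>l\<bar> * \<bar>v $ i\<bar> = \<bar>\<Sum>j\<in>UNIV. M $ i $ j * v $ j\<bar>"
    using arg_cong[OF v(2), of "\<lambda>w. \<bar>w $ i\<bar>"] by (simp add: matrix_vector_mult_def abs_mult)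
  also have "\<dots> \<le> (\<Sum>j\<in>UNIV. \<bar>M $ i $ j * v $ j\<bar>)" by (rule sum_abs)
  also have "\<dots> \<le> (\<Sum>j\<in>UNIV. M $ i $ j * (r i * x $ j))"
    by (rule sum_mono) (simp add: abs_mult nonneg v_le mult_left_mono)
  also have "\<dots> = r i * (M *v x) $ i" by (simp add: matrix_vector_mult_def sum_distrib_left mult_ac)
  also have "\<dots> < r i * (b * x $ i)" using sub \<open>0 < r i\<close> by simp
  finally have "\<bar>l\<bar> * \<bar>v $ i\<bar> < b * \<bar>v $ i\<bar>" using v_eq by (simp add: mult_ac)
  moreover have "0 < \<bar>v $ i\<bar>" using v_eq \<open>0 < r i\<close> pos[of i] by simp
  ultimately show ?thesis by (simp add: mult_less_cancel_right)
qed

lemma rho_less: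
  fixes M :: "real^'n^'n"
  assumes "symmetric_matrix M" "\<And>i j. 0 \<le> M $ i $ j" "\<And>i. 0 < x $ i"
    "\<And>i. (M *v x) $ i < b * x $ i"
  shows "rho M < b"
  using abs_eigenvalue_less[OF assms(2-4) rho_in_eigenvalues[OF assms(1)]] by linarith

section \<open>The matrices \<open>A\<^sub>\<alpha>\<close>, \<open>Z\<close> and \<open>W\<close>\<close>

lemma A_alpha_entry:
  "A_alpha \<alpha> E $ i $ j = (if i = j then \<alpha> * real (degree E i) else 0) + (if E i j then 1 - \<alpha> else 0)"
  by (simp add: A_alpha_def deg_matrix_def adj_matrix_def)

lemma A_alpha_nonneg: "0 \<le> \<alpha> \<Longrightarrow> \<alpha> \<le> 1 \<Longrightarrow> 0 \<le> A_alpha \<alpha> E $ i $ j"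
  by (simp add: A_alpha_entry)

lemma symmetric_A_alpha: "simple_graph E \<Longrightarrow> symmetric_matrix (A_alpha \<alpha> E)"
  by (auto simp: symmetric_matrix_def simple_graph_def transpose_def vec_eq_iff A_alpha_entry)

lemma A_alpha_mult_vec:
  "(A_alpha \<alpha> E *v x) $ v = \<alpha> * real (degree E v) * x $ v + (1 - \<alpha>) * (\<Sum>u | E v u. x $ u)"
proof -
  have "A_alpha \<alpha> E $ v $ j * x $ j
      = (if v = j then \<alpha> * real (degree E v) * x $ j else 0) + (1 - \<alpha>) * (if E v j then x $ j else 0)" for j
    by (simp add: A_alpha_entry algebra_simps)
  then have "(A_alpha \<alpha> E *v x) $ v
      = \<alpha> * real (degree E v) * x $ v + (1 - \<alpha>) * (\<Sum>j\<in>UNIV. if E v j then x $ j else 0)"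
    by (simp add: matrix_vector_mult_def sum.distrib sum_distrib_left[symmetric])
  also have "(\<Sum>j\<in>UNIV. if E v j then x $ j else 0) = (\<Sum>u | E v u. x $ u)"
    using sum.inter_filter[of UNIV "\<lambda>u. x $ u" "E v"] by simp
  finally show ?thesis .
qed

lemma Zmat_mult_vec:
  "(Zmat g *v v) $ 1 = g * v $ 1 + sqrt 2 * v $ 2"
  "(Zmat g *v v) $ 2 = sqrt 2 * v $ 1 + v $ 3"
  "(Zmat g *v v) $ 3 = v $ 2 + 2 * v $ 3"
  by (simp_all add: matrix_vector_mult_def sum_3 Zmat_def)

lemma Wmat_mult_vec:
  "(Wmat g *v v) $ 1 = g * v $ 1 + v $ 2"
  "(Wmat g *v v) $ 2 = v $ 1 + 2 * v $ 2"
  by (simp_all add: matrix_vector_mult_def sum_2 Wmat_def)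

lemma symmetric_Zmat: "symmetric_matrix (Zmat g)"
  by (simp add: symmetric_matrix_def transpose_def vec_eq_iff forall_3 Zmat_def)

lemma symmetric_Wmat: "symmetric_matrix (Wmat g)"
  by (simp add: symmetric_matrix_def transpose_def vec_eq_iff forall_2 Wmat_def)

text \<open>Eliminating the eigenvector: \<open>v\<^sub>2 = (l - 2) v\<^sub>3\<close> and \<open>\<surd>2 v\<^sub>1 = (l\<^sup>2 - 2l - 1) v\<^sub>3\<close>.\<close>

lemma Zmat_eigenvalue_iff:
  "l \<in> eigenvalues (Zmat g) \<longleftrightarrow> (l - g) * (l\<^sup>2 - 2 * l - 1) = 2 * (l - 2)"
proof
  assume "l \<in> eigenvalues (Zmat g)"
  then obtain v where v: "v \<noteq> 0" "Zmat g *v v = l *\<^sub>R v" unfolding eigenvalues_def by blast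
  have e1: "g * v $ 1 + sqrt 2 * v $ 2 = l * v $ 1"
    and e2: "sqrt 2 * v $ 1 + v $ 3 = l * v $ 2"
    and e3: "v $ 2 + 2 * v $ 3 = l * v $ 3"
    using v(2) by (simp_all add: vec_eq_iff forall_3 Zmat_mult_vec)
  have v2: "v $ 2 = (l - 2) * v $ 3" using e3 by (simp add: algebra_simps)
  have v1: "sqrt 2 * v $ 1 = (l\<^sup>2 - 2 * l - 1) * v $ 3"
    using e2 v2 by (simp add: algebra_simps power2_eq_square)
  have "(l - g) * (sqrt 2 * v $ 1) = sqrt 2 * (l * v $ 1 - g * v $ 1)"
    by (simp add: algebra_simps)
  also have "\<dots> = sqrt 2 * (sqrt 2 * v $ 2)" using e1 by simp
  also have "\<dots> = 2 * v $ 2" by (simp add: mult.assoc[symmetric])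
  finally have "(l - g) * (sqrt 2 * v $ 1) = 2 * v $ 2" .
  moreover have "v $ 3 \<noteq> 0"
    using v(1) e2 v2 by (auto simp: vec_eq_iff forall_3)
  ultimately show "(l - g) * (l\<^sup>2 - 2 * l - 1) = 2 * (l - 2)"
    unfolding v1 v2 by (simp add: mult.assoc[symmetric])
next
  assume char: "(l - g) * (l\<^sup>2 - 2 * l - 1) = 2 * (l - 2)"
  define v :: "real^3" where "v = vector [(l\<^sup>2 - 2 * l - 1) / sqrt 2, l - 2, 1]"
  have "v $ 3 = 1" by (simp add: v_def)
  then have "v \<noteq> 0" by auto
  moreover have "Zmat g *v v = l *\<^sub>R v"
  proof -
    have v1: "sqrt 2 * v $ 1 = l\<^sup>2 - 2 * l - 1" by (simp add: v_def)
    have "sqrt 2 * (g * v $ 1 + sqrt 2 * v $ 2) = g * (sqrt 2 * v $ 1) + 2 * (l - 2)"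
      by (simp add: v_def algebra_simps)
    also have "\<dots> = l * (sqrt 2 * v $ 1)" unfolding v1 using char by (simp add: algebra_simps)
    finally have "g * v $ 1 + sqrt 2 * v $ 2 = l * v $ 1" by simp
    moreover have "sqrt 2 * v $ 1 + v $ 3 = l * v $ 2"
      unfolding v1 by (simp add: v_def algebra_simps power2_eq_square)
    ultimately show ?thesis by (simp add: vec_eq_iff forall_3 Zmat_mult_vec v_def)
  qed
  ultimately show "l \<in> eigenvalues (Zmat g)" unfolding eigenvalues_def by blast
qed

lemma Wmat_eigenvalue_iff: "l \<in> eigenvalues (Wmat g) \<longleftrightarrow> (l - g) * (l - 2) = 1"
proof
  assume "l \<in> eigenvalues (Wmat g)"
  then obtain v where v: "v \<noteq> 0" "Wmat g *v v = l *\<^sub>R v" unfolding eigenvalues_def by blast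
  have e1: "g * v $ 1 + v $ 2 = l * v $ 1" and e2: "v $ 1 + 2 * v $ 2 = l * v $ 2"
    using v(2) by (simp_all add: vec_eq_iff forall_2 Wmat_mult_vec)
  have v1: "v $ 1 = (l - 2) * v $ 2" using e2 by (simp add: algebra_simps)
  have "v $ 2 \<noteq> 0" using v(1) v1 by (auto simp: vec_eq_iff forall_2)
  moreover have "((l - g) * (l - 2)) * v $ 2 = 1 * v $ 2" using e1 v1 by (simp add: algebra_simps)
  ultimately show "(l - g) * (l - 2) = 1" by simp
next
  assume "(l - g) * (l - 2) = 1"
  then have "Wmat g *v vector [l - 2, 1] = l *\<^sub>R vector [l - 2, 1]"
    by (simp add: vec_eq_iff forall_2 Wmat_mult_vec algebra_simps)
  moreover have "vector [l - 2, 1] \<noteq> (0::real^2)" by (metis vector_2(2) zero_index zero_neq_one)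
  ultimately show "l \<in> eigenvalues (Wmat g)" unfolding eigenvalues_def by blast
qed

lemma rho_Zmat_eq_iff:
  fixes c g :: real
  assumes "2 < c" "0 < c\<^sup>2 - 2 * c - 1"
  shows "rho (Zmat g) = c \<longleftrightarrow> (c - g) * (c\<^sup>2 - 2 * c - 1) = 2 * (c - 2)"
proof
  assume "rho (Zmat g) = c"
  then show "(c - g) * (c\<^sup>2 - 2 * c - 1) = 2 * (c - 2)"
    using rho_in_eigenvalues[OF symmetric_Zmat, of g] by (simp add: Zmat_eigenvalue_iff)
next
  let ?P = "\<lambda>x::real. x\<^sup>2 - 2 * x - 1"
  assume char: "(c - g) * ?P c = 2 * (c - 2)"
  show "rho (Zmat g) = c"
  proof (rule rho_eqI[OF symmetric_Zmat])
    show "c \<in> eigenvalues (Zmat g)" using char by (simp add: Zmat_eigenvalue_iff)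
    fix l assume "l \<in> eigenvalues (Zmat g)"
    then have l_char: "(l - g) * ?P l = 2 * (l - 2)" by (simp add: Zmat_eigenvalue_iff)
    show "l \<le> c"
    proof (rule ccontr)
      assume "\<not> l \<le> c"
      then have "c < l" by simp
      have "?P l - ?P c = (l - c) * (l + c - 2)" by (simp add: power2_eq_square algebra_simps)
      moreover have "0 < (l - c) * (l + c - 2)" using \<open>c < l\<close> assms(1) by (intro mult_pos_pos) auto
      ultimately have "?P c < ?P l" by linarith
      have "(c - 2) * ?P l - (l - 2) * ?P c = (l - c) * ((l - 2) * (c - 2) + 1)"
        by (simp add: power2_eq_square algebra_simps)
      moreover have "0 < (l - c) * ((l - 2) * (c - 2) + 1)"
        using \<open>c < l\<close> assms(1) by (intro mult_pos_pos) (auto intro: add_nonneg_pos)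
      ultimately have ratio: "(l - 2) * ?P c < (c - 2) * ?P l" by linarith
      have "0 < c - g"
        using char assms zero_less_mult_iff[of "c - g" "?P c"] by simp
      have "(2 * (l - 2)) * ?P c < 2 * (c - 2) * ?P l" using ratio by (simp only: mult.assoc)
      also have "\<dots> = ((c - g) * ?P c) * ?P l" by (simp only: char)
      also have "\<dots> = ((c - g) * ?P l) * ?P c" by (simp only: mult_ac)
      finally have "2 * (l - 2) < (c - g) * ?P l"
        using assms(2) by (simp only: mult_less_cancel_right)
      also have "\<dots> < (l - g) * ?P l"
        using \<open>c < l\<close> \<open>?P c < ?P l\<close> assms(2) by (intro mult_strict_right_mono) auto
      finally show False using l_char by simp
    qed
  qed
qed

lemma rho_Wmat_eq_iff:
  fixes c g :: real
  assumes "2 < c"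
  shows "rho (Wmat g) = c \<longleftrightarrow> (c - g) * (c - 2) = 1"
proof
  assume "rho (Wmat g) = c"
  then show "(c - g) * (c - 2) = 1"
    using rho_in_eigenvalues[OF symmetric_Wmat, of g] by (simp add: Wmat_eigenvalue_iff)
next
  assume char: "(c - g) * (c - 2) = 1"
  show "rho (Wmat g) = c"
  proof (rule rho_eqI[OF symmetric_Wmat])
    show "c \<in> eigenvalues (Wmat g)" using char by (simp add: Wmat_eigenvalue_iff)
    fix l assume "l \<in> eigenvalues (Wmat g)"
    then have l_char: "(l - g) * (l - 2) = 1" by (simp add: Wmat_eigenvalue_iff)
    show "l \<le> c"
    proof (rule ccontr)
      assume "\<not> l \<le> c"
      moreover have "0 < c - g"
        using char assms zero_less_mult_iff[of "c - g" "c - 2"] by simp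
      ultimately have "(c - g) * (c - 2) < (l - g) * (l - 2)"
        using assms by (intro mult_strict_mono) auto
      then show False using char l_char by simp
    qed
  qed
qed

definition adjacency_bound :: "nat \<Rightarrow> real" where
  "adjacency_bound k = 2 * sqrt 2 * cos (pi / (2 * real k + 1))"

lemma adjacency_bound_less_3: "adjacency_bound k < 3"
proof -
  have "sqrt 2 < sqrt (1.5\<^sup>2)" by (rule real_sqrt_less_mono) (simp add: power2_eq_square)
  then have "2 * sqrt 2 < 3" by simp
  moreover have "2 * sqrt 2 * cos (pi / (2 * real k + 1)) \<le> 2 * sqrt 2" by simp
  ultimately show ?thesis unfolding adjacency_bound_def by linarith
qed

lemma adjacency_bound_3_gt: "2.44 < adjacency_bound 3"
proof -
  have "cos (pi / 6) < cos (pi / 7)" by (rule cos_monotone_0_pi) (auto simp: divide_strict_left_mono)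
  then have "2 * sqrt 2 * (sqrt 3 / 2) < adjacency_bound 3"
    by (simp add: adjacency_bound_def cos_30)
  moreover have "2 * sqrt 2 * (sqrt 3 / 2) = sqrt 6" by (simp add: real_sqrt_mult[symmetric])
  moreover have "2.44 < sqrt 6" by (rule real_less_rsqrt) (simp add: power2_eq_square)
  ultimately show ?thesis by (simp add: field_simps)
qed

lemma adjacency_bound_2_gt: "2 < adjacency_bound 2"
proof -
  have "cos (pi / 4) < cos (pi / 5)" by (rule cos_monotone_0_pi) (auto simp: divide_strict_left_mono)
  then have "sqrt 2 * sqrt 2 < sqrt 2 * (2 * cos (pi / 5))"
    by (intro mult_strict_left_mono) (auto simp: cos_45)
  then show ?thesis by (simp add: adjacency_bound_def mult_ac)
qed

lemma quadratic_pos: "2.44 < t \<Longrightarrow> 0 < t\<^sup>2 - 2 * t - (1::real)"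
proof -
  assume "2.44 < t"
  then have "1.44 * 1.44 < (t - 1) * (t - 1)" by (intro mult_strict_mono) auto
  then show ?thesis by (simp add: power2_eq_square algebra_simps)
qed

lemma gamma0_eq:
  defines "c \<equiv> adjacency_bound 3"
  shows "gamma0 = c - 2 * (c - 2) / (c\<^sup>2 - 2 * c - 1)"
proof -
  have "0 < c\<^sup>2 - 2 * c - 1" using quadratic_pos adjacency_bound_3_gt by (simp add: c_def)
  then have "rho (Zmat g) = 2 * sqrt 2 * cos (pi / 7) \<longleftrightarrow> g = c - 2 * (c - 2) / (c\<^sup>2 - 2 * c - 1)" for g
    using rho_Zmat_eq_iff[of c g] adjacency_bound_3_gt
    by (auto simp: c_def adjacency_bound_def field_simps)
  then show ?thesis unfolding gamma0_def by simp
qed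

lemma gamma0_less_2: "gamma0 < 2"
proof -
  define c where "c = adjacency_bound 3"
  define P where "P = c\<^sup>2 - 2 * c - 1"
  have c: "2.44 < c" "c < 3" using adjacency_bound_3_gt adjacency_bound_less_3 by (simp_all add: c_def)
  have "(c - 3) * (c + 1) < 0" using c by (intro mult_neg_pos) auto
  then have "P < 2" by (simp add: P_def power2_eq_square algebra_simps)
  then have "(c - 2) * P < (c - 2) * 2" using c by (intro mult_strict_left_mono) auto
  then have "c - 2 < 2 * (c - 2) / P"
    using quadratic_pos[OF c(1)] by (simp add: P_def less_divide_eq mult.commute)
  then show ?thesis using gamma0_eq by (simp add: c_def P_def)
qed

lemma delta0_eq:
  defines "c \<equiv> adjacency_bound 2"
  shows "delta0 = c - 1 / (c - 2)"
proof -
  have "rho (Wmat g) = 2 * sqrt 2 * cos (pi / 5) \<longleftrightarrow> g = c - 1 / (c - 2)" for g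
    using rho_Wmat_eq_iff[of c g] adjacency_bound_2_gt
    by (auto simp: c_def adjacency_bound_def field_simps)
  then show ?thesis unfolding delta0_def by simp
qed

lemma delta0_less_2: "delta0 < 2"
proof -
  define c where "c = adjacency_bound 2"
  have c: "2 < c" "c < 3" using adjacency_bound_2_gt adjacency_bound_less_3 by (simp_all add: c_def)
  have "(c - 2) * (c - 2) < 1 * 1" using c by (intro mult_strict_mono) auto
  then have "c - 2 < 1 / (c - 2)" using c by (simp add: less_divide_eq)
  then show ?thesis using delta0_eq by (simp add: c_def)
qed

lemma isCont_less_left_of:
  fixes g :: "real \<Rightarrow> real"
  assumes "isCont g c" "g c < \<mu>" "a < c"
  obtains t where "a < t" "t < c" "g t < \<mu>"
proof -
  have "eventually (\<lambda>t. g t < \<mu>) (at_left c)"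
    using order_tendstoD(2)[OF assms(1)[unfolded isCont_def] assms(2)]
    by (simp add: eventually_at_split)
  moreover have "eventually (\<lambda>t. a < t \<and> t < c) (at_left c)"
    using eventually_at_left_real[OF assms(3)] by simp
  ultimately have "eventually (\<lambda>t. a < t \<and> t < c \<and> g t < \<mu>) (at_left c)"
    by eventually_elim auto
  then show ?thesis using that eventually_happens'[OF trivial_limit_at_left_real] by blast
qed

lemma alpha_threshold:
  fixes \<theta> \<alpha> :: real
  assumes "\<theta> < 2" "\<alpha> < 1" "- \<theta> / (2 - \<theta>) < \<alpha>"
  shows "- \<theta> < 2 * \<alpha> / (1 - \<alpha>)"
proof -
  have "- \<theta> < \<alpha> * (2 - \<theta>)"
    using pos_divide_less_eq[of "2 - \<theta>" "- \<theta>" \<alpha>] assms(1,3) by simp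
  then have "- \<theta> * (1 - \<alpha>) < 2 * \<alpha>" by (simp add: algebra_simps)
  then show ?thesis using assms(2) by (simp add: less_divide_eq)
qed

section \<open>Unicyclic graphs\<close>

lemma degree_le_max_degree: "degree E v \<le> max_degree E"
  unfolding max_degree_def by (rule Max_ge) simp_all

lemma weighted_count_le:
  fixes p q m n a b :: real
  assumes "p + q \<le> n" "p \<le> m" "m \<le> n" "0 \<le> q" "0 \<le> b" "b \<le> a"
  shows "p * a + q * b \<le> m * a + (n - m) * b"
proof -
  have "q * b \<le> (n - p) * b" using assms by (intro mult_right_mono) auto
  moreover have "p * (a - b) \<le> m * (a - b)" using assms by (intro mult_right_mono) auto
  ultimately show ?thesis by (simp add: algebra_simps)
qed

locale unicyclic_graph =
  fixes E :: "'a::finite \<Rightarrow> 'a \<Rightarrow> bool"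
  assumes simple: "simple_graph E" and unicyclic: "unicyclic E"
begin

definition the_cycle :: "'a list" where
  "the_cycle = (SOME C. is_cycle E C)"

abbreviation forest :: "'a \<Rightarrow> 'a \<Rightarrow> bool" where
  "forest \<equiv> remove_cycle E the_cycle"

lemma is_cycle_the_cycle: "is_cycle E the_cycle"
  using unicyclic unfolding unicyclic_def the_cycle_def by (metis someI_ex)

lemma the_cycle_not_Nil: "the_cycle \<noteq> []"
  using is_cycle_the_cycle unfolding is_cycle_def by auto

lemma adjacent_sym: "E x y \<Longrightarrow> E y x"
  using simple unfolding simple_graph_def by blast

lemma not_adjacent_self: "\<not> E x x"
  using simple unfolding simple_graph_def by blast

lemma forest_imp_adjacent: "forest x y \<Longrightarrow> E x y"
  by (simp add: remove_cycle_def)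

lemma forest_if_off_cycle: "E x y \<Longrightarrow> x \<notin> set the_cycle \<or> y \<notin> set the_cycle \<Longrightarrow> forest x y"
  by (auto simp: remove_cycle_def dest: cycle_edge_in_set)

lemma cycle_edge_the_cycle: "is_cycle E D \<Longrightarrow> cycle_edge D a b \<Longrightarrow> cycle_edge the_cycle a b"
  using unicyclic is_cycle_the_cycle unfolding unicyclic_def by blast

lemma adjacent_on_cycle_imp_cycle_edge:
  assumes "u \<in> set the_cycle" "w \<in> set the_cycle" "E u w"
  shows "cycle_edge the_cycle u w"
proof (rule ccontr)
  assume not_edge: "\<not> cycle_edge the_cycle u w"
  obtain ws where ws: "walk (cycle_edge the_cycle) ws" "hd ws = w" "last ws = u"
    using cycle_walk[OF assms(2,1)] by blast
  have "walk (\<lambda>x y. E x y \<and> {x, y} \<noteq> {u, w}) ws"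
  proof (rule walk_mono[OF ws(1)])
    fix x y assume xy: "cycle_edge the_cycle x y"
    then have "{x, y} \<noteq> {u, w}"
      using not_edge unfolding cycle_edge_def by metis
    then show "E x y \<and> {x, y} \<noteq> {u, w}"
      using cycle_edge_adjacent[OF simple is_cycle_the_cycle xy] by blast
  qed
  then show False
    using cycle_through_edge[OF simple assms(3)] ws not_edge cycle_edge_the_cycle by blast
qed

lemma forest_walk_from_cycle: "\<exists>ws. walk forest ws \<and> hd ws \<in> set the_cycle \<and> last ws = v"
proof -
  have "walk E ys \<Longrightarrow> hd ys \<in> set the_cycle
      \<Longrightarrow> \<exists>ws. walk forest ws \<and> hd ws \<in> set the_cycle \<and> last ws = last ys" for ys
  proof (induction ys rule: rev_induct)
    case (snoc y ys)
    show ?case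
    proof (cases "y \<in> set the_cycle")
      case True
      then show ?thesis by (intro exI[of _ "[y]"]) simp
    next
      case False
      then have "ys \<noteq> []" using snoc.prems by auto
      then have "walk E ys" "E (last ys) y" "hd ys \<in> set the_cycle"
        using snoc.prems by (auto simp: walk_snoc_iff)
      then obtain ws where ws: "walk forest ws" "hd ws \<in> set the_cycle" "last ws = last ys"
        using snoc.IH by blast
      have "forest (last ys) y" using forest_if_off_cycle \<open>E (last ys) y\<close> False by blast
      then show ?thesis
        using ws walk_not_Nil[OF ws(1)]
        by (intro exI[of _ "ws @ [y]"]) (auto simp: walk_snoc_iff hd_append)
    qed
  qed simp
  moreover obtain ys where "walk E ys" "hd ys = the_cycle ! 0" "last ys = v"
    using unicyclic unfolding unicyclic_def connected_graph_def reachable_def by blast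
  ultimately show ?thesis using the_cycle_not_Nil by fastforce
qed

definition depth :: "'a \<Rightarrow> nat" where
  "depth v = (LEAST m. \<exists>ws. walk forest ws \<and> hd ws \<in> set the_cycle \<and> last ws = v \<and> length ws = Suc m)"

lemma depth_walk:
  obtains ws where "walk forest ws" "hd ws \<in> set the_cycle" "last ws = v" "length ws = Suc (depth v)"
proof -
  obtain ws where ws: "walk forest ws" "hd ws \<in> set the_cycle" "last ws = v"
    using forest_walk_from_cycle by blast
  then have "length ws = Suc (length ws - 1)" using walk_not_Nil by fastforce
  with ws have "\<exists>m ws. walk forest ws \<and> hd ws \<in> set the_cycle \<and> last ws = v \<and> length ws = Suc m"
    by blast
  then have "\<exists>ws. walk forest ws \<and> hd ws \<in> set the_cycle \<and> last ws = v \<and> length ws = Suc (depth v)"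
    unfolding depth_def by (rule LeastI_ex)
  then show ?thesis using that by blast
qed

lemma depth_le_length:
  assumes "walk forest ws" "hd ws \<in> set the_cycle" "last ws = v"
  shows "depth v \<le> length ws - 1"
proof -
  have "length ws = Suc (length ws - 1)" using walk_not_Nil[OF assms(1)] by simp
  then show ?thesis unfolding depth_def using assms by (intro Least_le) blast
qed

lemma depth_eq_0_iff: "depth v = 0 \<longleftrightarrow> v \<in> set the_cycle"
proof
  assume "depth v = 0"
  then obtain ws where "walk forest ws" "hd ws \<in> set the_cycle" "last ws = v" "length ws = 1"
    using depth_walk[of v] by auto
  then show "v \<in> set the_cycle" by (auto simp: length_Suc_conv)
next
  assume "v \<in> set the_cycle"
  then show "depth v = 0" using depth_le_length[of "[v]" v] by simp
qed

lemma depth_forest_edge: "forest u w \<Longrightarrow> depth w \<le> Suc (depth u)"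
proof (rule depth_walk[of u])
  fix ws assume ws: "walk forest ws" "hd ws \<in> set the_cycle" "last ws = u" "length ws = Suc (depth u)"
    and "forest u w"
  then have "walk forest (ws @ [w])" "hd (ws @ [w]) \<in> set the_cycle"
    using walk_not_Nil[OF ws(1)] by (auto simp: walk_snoc_iff hd_append)
  then show "depth w \<le> Suc (depth u)" using depth_le_length[of "ws @ [w]" w] ws(4) by simp
qed

lemma depth_adjacent:
  assumes "E u w"
  shows "depth w \<le> Suc (depth u)"
proof (cases "w \<in> set the_cycle")
  case True
  then show ?thesis using depth_eq_0_iff[of w] by simp
next
  case False
  then show ?thesis using assms forest_if_off_cycle depth_forest_edge by blast
qed

text \<open>A shortest walk to \<open>u\<close> only passes through vertices shallower than \<open>u\<close>.\<close>

lemma shortest_walk_avoids: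
  assumes "depth u \<le> depth v" "u \<noteq> v"
  obtains ws where "walk forest ws" "hd ws \<in> set the_cycle" "last ws = u" "v \<notin> set ws"
proof (rule depth_walk[of u])
  fix ws assume ws: "walk forest ws" "hd ws \<in> set the_cycle" "last ws = u" "length ws = Suc (depth u)"
  have "v \<notin> set ws"
  proof
    assume "v \<in> set ws"
    then obtain p where p: "p < length ws" "ws ! p = v" by (metis in_set_conv_nth)
    have "p \<noteq> length ws - 1"
      using p ws(3) assms(2) walk_not_Nil[OF ws(1)] by (auto simp: last_conv_nth)
    then have "p < depth u" using p ws(4) by simp
    have "walk forest (take (Suc p) ws)" "hd (take (Suc p) ws) \<in> set the_cycle"
      "last (take (Suc p) ws) = v"
      using walk_take[OF ws(1), of "Suc p"] ws(2) walk_not_Nil[OF ws(1)] p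
      by (auto simp: take_Suc_conv_app_nth[symmetric]) (simp add: take_Suc_conv_app_nth)
    then have "depth v \<le> p" using depth_le_length p by fastforce
    then show False using \<open>p < depth u\<close> assms(1) by simp
  qed
  with ws show thesis using that by blast
qed

text \<open>Go down from \<open>u\<^sub>2\<close> to the cycle, around the cycle, and up to \<open>u\<^sub>1\<close>.\<close>

lemma walk_between_shallow:
  assumes "v \<notin> set the_cycle" "depth u\<^sub>1 \<le> depth v" "depth u\<^sub>2 \<le> depth v" "u\<^sub>1 \<noteq> v" "u\<^sub>2 \<noteq> v"
  obtains W where "walk E W" "hd W = u\<^sub>2" "last W = u\<^sub>1" "v \<notin> set W"
proof -
  obtain ws\<^sub>1 where ws\<^sub>1: "walk forest ws\<^sub>1" "hd ws\<^sub>1 \<in> set the_cycle" "last ws\<^sub>1 = u\<^sub>1" "v \<notin> set ws\<^sub>1"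
    using shortest_walk_avoids[OF assms(2,4)] by blast
  obtain ws\<^sub>2 where ws\<^sub>2: "walk forest ws\<^sub>2" "hd ws\<^sub>2 \<in> set the_cycle" "last ws\<^sub>2 = u\<^sub>2" "v \<notin> set ws\<^sub>2"
    using shortest_walk_avoids[OF assms(3,5)] by blast
  obtain cw where cw: "walk (cycle_edge the_cycle) cw" "hd cw = hd ws\<^sub>2" "last cw = hd ws\<^sub>1"
    "set cw \<subseteq> set the_cycle"
    using cycle_walk[OF ws\<^sub>2(2) ws\<^sub>1(2)] by blast
  have "walk E (rev ws\<^sub>2)"
    using walk_rev[OF adjacent_sym walk_mono[OF ws\<^sub>2(1) forest_imp_adjacent]] .
  moreover have "walk E cw"
    using walk_mono[OF cw(1) cycle_edge_adjacent[OF simple is_cycle_the_cycle]] .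
  moreover have "last (rev ws\<^sub>2) = hd cw" using cw(2) walk_not_Nil[OF ws\<^sub>2(1)] by (simp add: last_rev)
  ultimately have J: "walk E (rev ws\<^sub>2 @ tl cw)" "hd (rev ws\<^sub>2 @ tl cw) = u\<^sub>2"
    "last (rev ws\<^sub>2 @ tl cw) = hd ws\<^sub>1" "v \<notin> set (rev ws\<^sub>2 @ tl cw)"
    using walk_join[of E "rev ws\<^sub>2" cw] ws\<^sub>2 cw assms(1) walk_not_Nil[OF ws\<^sub>2(1)] by (auto simp: hd_rev)
  note J' = walk_join[OF J(1) walk_mono[OF ws\<^sub>1(1) forest_imp_adjacent] J(3)]
  show thesis
  proof (rule that[OF J'(1)])
    show "hd ((rev ws\<^sub>2 @ tl cw) @ tl ws\<^sub>1) = u\<^sub>2" using J'(2) J(2) by simp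
    show "last ((rev ws\<^sub>2 @ tl cw) @ tl ws\<^sub>1) = u\<^sub>1" using J'(3) ws\<^sub>1(3) by simp
    show "v \<notin> set ((rev ws\<^sub>2 @ tl cw) @ tl ws\<^sub>1)" using J'(4) J(4) ws\<^sub>1(4) by blast
  qed
qed

text \<open>Two distinct neighbours \<open>u\<^sub>1, u\<^sub>2\<close> of \<open>v\<close>, both no deeper than \<open>v\<close>, would give a
  second cycle \<open>v u\<^sub>2 \<dots> u\<^sub>1 v\<close> through the forest edge \<open>u\<^sub>1 v\<close>.\<close>

lemma shallow_neighbour_unique:
  assumes v: "v \<notin> set the_cycle" and adj: "E v u\<^sub>1" "E v u\<^sub>2"
    and shallow: "depth u\<^sub>1 \<le> depth v" "depth u\<^sub>2 \<le> depth v"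
  shows "u\<^sub>1 = u\<^sub>2"
proof (rule ccontr)
  assume "u\<^sub>1 \<noteq> u\<^sub>2"
  have "u\<^sub>1 \<noteq> v" "u\<^sub>2 \<noteq> v" using adj not_adjacent_self by auto
  then obtain W where W: "walk E W" "hd W = u\<^sub>2" "last W = u\<^sub>1" "v \<notin> set W"
    using walk_between_shallow[OF v shallow] by blast
  let ?E' = "\<lambda>x y. E x y \<and> {x, y} \<noteq> {u\<^sub>1, v}"
  have "walk ?E' W"
  proof (rule walk_mono[OF W(1)])
    fix x y assume "x \<in> set W" "y \<in> set W" "E x y"
    then have "v \<notin> {x, y}" using W(4) by auto
    then have "{x, y} \<noteq> {u\<^sub>1, v}" by blast
    with \<open>E x y\<close> show "?E' x y" by blast
  qed
  moreover have "?E' v u\<^sub>2" using adj \<open>u\<^sub>1 \<noteq> u\<^sub>2\<close> \<open>u\<^sub>2 \<noteq> v\<close> by (auto simp: doubleton_eq_iff)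
  ultimately have "walk ?E' (v # W)" using W(2) walk_not_Nil[OF W(1)] by (simp add: walk_Cons_iff)
  then have "\<exists>D. is_cycle E D \<and> cycle_edge D u\<^sub>1 v"
    by (rule cycle_through_edge[OF simple adjacent_sym[OF adj(1)]])
      (use W(3) walk_not_Nil[OF W(1)] in auto)
  then have "cycle_edge the_cycle u\<^sub>1 v" using cycle_edge_the_cycle by blast
  with v show False by (simp add: cycle_edge_in_set)
qed

lemma depth_less_kG: "depth v < kG E"
proof -
  obtain ws where ws: "walk forest ws" "hd ws \<in> set the_cycle" "last ws = v"
    using forest_walk_from_cycle by blast
  define c where "c = hd ws"
  define S where "S = {gdist forest v u | v u. v \<in> set the_cycle \<and> reachable forest v u}"
  have "reachable forest c v" using ws c_def unfolding reachable_def by blast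
  then have "gdist forest c v \<in> S" using ws(2) c_def unfolding S_def by blast
  moreover have "finite S"
    by (rule finite_subset[of _ "(\<lambda>(a, b). gdist forest a b) ` UNIV"]) (auto simp: S_def)
  moreover have "\<exists>xs. walk forest xs \<and> hd xs = c \<and> last xs = v \<and> length xs = gdist forest c v + 1"
    unfolding gdist_def
    by (rule LeastI_ex) (use ws c_def walk_not_Nil[OF ws(1)] in \<open>auto intro!: exI[of _ "length ws - 1"]\<close>)
  then have "depth v \<le> gdist forest c v"
    using depth_le_length ws(2) c_def by fastforce
  ultimately have "depth v \<le> Max S" using Max_ge order_trans by blast
  then show ?thesis unfolding kG_def k_of_def the_cycle_def[symmetric] S_def by simp
qed

lemma card_cycle_neighbours:
  assumes "v \<in> set the_cycle"
  shows "card {u. E v u \<and> u \<in> set the_cycle} \<le> 2"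
proof -
  let ?C = the_cycle and ?n = "length the_cycle"
  obtain p where p: "p < ?n" "v = ?C ! p" using assms by (metis in_set_conv_nth)
  have distinct: "distinct ?C" using is_cycle_the_cycle unfolding is_cycle_def by blast
  have "{u. E v u \<and> u \<in> set ?C} \<subseteq> {?C ! ((p + 1) mod ?n), ?C ! ((p + ?n - 1) mod ?n)}"
  proof
    fix w assume "w \<in> {u. E v u \<and> u \<in> set ?C}"
    then have "cycle_edge ?C v w" using adjacent_on_cycle_imp_cycle_edge assms by blast
    then obtain i where i: "i < ?n" "{v, w} = {?C ! i, ?C ! ((i + 1) mod ?n)}"
      unfolding cycle_edge_def by blast
    then have succ: "(i + 1) mod ?n < ?n" by (metis mod_less_divisor not_less0 not_less_iff_gr_or_eq)
    from i(2) consider "v = ?C ! i" "w = ?C ! ((i + 1) mod ?n)"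
      | "v = ?C ! ((i + 1) mod ?n)" "w = ?C ! i"
      by (auto simp: doubleton_eq_iff)
    then show "w \<in> {?C ! ((p + 1) mod ?n), ?C ! ((p + ?n - 1) mod ?n)}"
    proof cases
      case 1
      then have "i = p" using p distinct i(1) nth_eq_iff_index_eq by metis
      then show ?thesis using 1 by simp
    next
      case 2
      then have ip: "(i + 1) mod ?n = p" using p distinct succ nth_eq_iff_index_eq by metis
      have "i = (p + ?n - 1) mod ?n"
      proof (cases "i + 1 < ?n")
        case True
        then show ?thesis using ip i(1) by auto
      next
        case False
        then have "Suc i = ?n" using i(1) by simp
        then show ?thesis using ip by simp
      qed
      then show ?thesis using 2 by simp
    qed
  qed
  then have "card {u. E v u \<and> u \<in> set ?C} \<le> card {?C ! ((p + 1) mod ?n), ?C ! ((p + ?n - 1) mod ?n)}"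
    by (intro card_mono) auto
  also have "\<dots> \<le> 2" by (simp add: card_insert_le_m1)
  finally show ?thesis .
qed

lemma card_shallow_neighbours_on_cycle:
  "v \<in> set the_cycle \<Longrightarrow> card {u. E v u \<and> depth u \<le> depth v} \<le> 2"
  using card_cycle_neighbours by (simp add: depth_eq_0_iff[symmetric])

lemma card_shallow_neighbours_off_cycle:
  "v \<notin> set the_cycle \<Longrightarrow> card {u. E v u \<and> depth u \<le> depth v} \<le> 1"
  using shallow_neighbour_unique by (auto simp: card_le_Suc0_iff_eq)

lemma degree_le_1_if_deepest:
  assumes "v \<notin> set the_cycle" "Suc (depth v) = kG E"
  shows "degree E v \<le> 1"
proof -
  have "{u. E v u} = {u. E v u \<and> depth u \<le> depth v}"
    using depth_adjacent[of v] depth_less_kG assms(2) by (metis (lifting) le_SucE not_less_iff_gr_or_eq)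
  then show ?thesis using card_shallow_neighbours_off_cycle[OF assms(1)] by (simp add: degree_def)
qed

text \<open>Neighbours not deeper than \<open>v\<close> have depth at least \<open>depth v - 1\<close>, which is \<open>0\<close> for a cycle
  vertex by truncated subtraction.\<close>

lemma A_alpha_level_row_le:
  fixes f :: "nat \<Rightarrow> real" and \<alpha> :: real and m n :: nat
  assumes "0 \<le> \<alpha>" "\<alpha> \<le> 1" "antimono f" "\<And>j. 0 \<le> f j" "degree E v \<le> n"
    "card {u. E v u \<and> depth u \<le> depth v} \<le> m" "m \<le> n"
  shows "(A_alpha \<alpha> E *v (\<chi> u. f (depth u))) $ v
    \<le> \<alpha> * n * f (depth v) + (1 - \<alpha>) * (m * f (depth v - 1) + (real n - m) * f (Suc (depth v)))"
proof -
  define S where "S = {u. E v u \<and> depth u \<le> depth v}"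
  define D where "D = {u. E v u} - S"
  have N: "{u. E v u} = S \<union> D" "S \<inter> D = {}" by (auto simp: S_def D_def)
  have "(\<Sum>u\<in>S. f (depth u)) \<le> card S * f (depth v - 1)"
  proof (rule sum_bounded_above)
    fix u assume "u \<in> S"
    then have "depth v \<le> Suc (depth u)" using depth_adjacent adjacent_sym by (auto simp: S_def)
    then show "f (depth u) \<le> f (depth v - 1)" using assms(3) by (simp add: antimono_def)
  qed
  moreover have "(\<Sum>u\<in>D. f (depth u)) = card D * f (Suc (depth v))"
  proof -
    have "depth u = Suc (depth v)" if "u \<in> D" for u
      using that depth_adjacent[of v u] by (auto simp: S_def D_def)
    then show ?thesis by simp
  qed
  ultimately have "(\<Sum>u | E v u. f (depth u)) \<le> card S * f (depth v - 1) + card D * f (Suc (depth v))"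
    by (simp add: N sum.union_disjoint)
  also have "\<dots> \<le> m * f (depth v - 1) + (real n - m) * f (Suc (depth v))"
  proof (rule weighted_count_le)
    have "card S + card D = degree E v"
      unfolding degree_def N by (simp add: card_Un_disjoint N(2))
    then show "real (card S) + real (card D) \<le> real n" using assms(5) by linarith
    show "f (Suc (depth v)) \<le> f (depth v - 1)" using assms(3) by (simp add: antimono_def)
  qed (use assms S_def in auto)
  finally have "(1 - \<alpha>) * (\<Sum>u | E v u. f (depth u))
      \<le> (1 - \<alpha>) * (m * f (depth v - 1) + (real n - m) * f (Suc (depth v)))"
    using assms(2) by (intro mult_left_mono) auto
  moreover have "\<alpha> * real (degree E v) * f (depth v) \<le> \<alpha> * n * f (depth v)"
    using assms by (intro mult_right_mono mult_left_mono) auto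
  ultimately show ?thesis by (simp add: A_alpha_mult_vec)
qed

lemma rho_A_alpha_less_level:
  fixes f :: "nat \<Rightarrow> real" and \<alpha> c :: real
  assumes "max_degree E = 3" "0 \<le> \<alpha>" "\<alpha> < 1" "2 \<le> kG E"
    and f: "antimono f" "\<And>j. 0 \<le> f j" "\<And>j. j < kG E \<Longrightarrow> 0 < f j"
    and cycle_row: "2 * f 0 + f 1 < c * f 0"
    and inner_row: "\<And>j. 0 < j \<Longrightarrow> Suc j < kG E \<Longrightarrow> f (j - 1) + 2 * f (Suc j) < c * f j"
    and leaf_row: "(1 - \<alpha>) * f (kG E - 2) < (2 * \<alpha> + (1 - \<alpha>) * c) * f (kG E - 1)"
  shows "rho (A_alpha \<alpha> E) < 3 * \<alpha> + (1 - \<alpha>) * c"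
proof (rule rho_less)
  let ?x = "\<chi> u. f (depth u)" and ?b = "3 * \<alpha> + (1 - \<alpha>) * c"
  show "symmetric_matrix (A_alpha \<alpha> E)" using simple by (rule symmetric_A_alpha)
  show "0 \<le> A_alpha \<alpha> E $ i $ j" for i j using assms(2,3) by (simp add: A_alpha_nonneg)
  show "0 < ?x $ v" for v using f(3) depth_less_kG by simp
  fix v
  let ?j = "depth v"
  have deg: "degree E v \<le> 3" using degree_le_max_degree[of E v] assms(1) by simp
  have row: "(A_alpha \<alpha> E *v ?x) $ v
      \<le> \<alpha> * n * f ?j + (1 - \<alpha>) * (m * f (?j - 1) + (real n - m) * f (Suc ?j))"
    if "degree E v \<le> n" "card {u. E v u \<and> depth u \<le> ?j} \<le> m" "m \<le> n" for m n
    using A_alpha_level_row_le[OF assms(2) _ f(1,2) that] assms(3) by simp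
  consider "v \<in> set the_cycle" | "v \<notin> set the_cycle" "Suc ?j < kG E"
    | "v \<notin> set the_cycle" "Suc ?j = kG E"
    using depth_less_kG[of v] by linarith
  then show "(A_alpha \<alpha> E *v ?x) $ v < ?b * ?x $ v"
  proof cases
    case 1
    then have "?j = 0" by (simp add: depth_eq_0_iff)
    have "(A_alpha \<alpha> E *v ?x) $ v \<le> 3 * \<alpha> * f 0 + (1 - \<alpha>) * (2 * f 0 + f 1)"
      using row[OF deg card_shallow_neighbours_on_cycle[OF 1]] \<open>?j = 0\<close> by simp
    also have "\<dots> < ?b * f 0"
      using mult_strict_left_mono[OF cycle_row, of "1 - \<alpha>"] assms(3) by (simp add: algebra_simps)
    finally show ?thesis using \<open>?j = 0\<close> by simp
  next
    case 2
    then have "0 < ?j" using depth_eq_0_iff[of v] by simp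
    have "(A_alpha \<alpha> E *v ?x) $ v \<le> 3 * \<alpha> * f ?j + (1 - \<alpha>) * (f (?j - 1) + 2 * f (Suc ?j))"
      using row[OF deg card_shallow_neighbours_off_cycle[OF 2(1)]] by simp
    also have "\<dots> < ?b * f ?j"
      using mult_strict_left_mono[OF inner_row[OF \<open>0 < ?j\<close> 2(2)], of "1 - \<alpha>"] assms(3)
      by (simp add: algebra_simps)
    finally show ?thesis by simp
  next
    case 3
    have "(A_alpha \<alpha> E *v ?x) $ v \<le> \<alpha> * f ?j + (1 - \<alpha>) * f (?j - 1)"
      using row[OF degree_le_1_if_deepest[OF 3] card_shallow_neighbours_off_cycle[OF 3(1)]] by simp
    also have "\<dots> < ?b * f ?j"
    proof -
      have "?j - 1 = kG E - 2" "?j = kG E - 1" using 3(2) by auto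
      then show ?thesis using leaf_row by (simp add: algebra_simps)
    qed
    finally show ?thesis by simp
  qed
qed

text \<open>For \<open>k(G) = 3\<close> the level values \<open>1, t - 2, (t\<^sup>2 - 2t - 1)/2\<close> solve the cycle and inner rows with
  equality at \<open>t = 2\<surd>2 cos(\<pi>/7)\<close>; the hypothesis on \<open>\<alpha>\<close> is exactly the leaf row at that \<open>t\<close>,
  so \<open>t\<close> may be decreased slightly to make all three rows strict.\<close>

lemma rho_A_alpha_less_depth_3:
  assumes "max_degree E = 3" "kG E = 3" "0 < \<alpha>" "\<alpha> < 1" "- gamma0 / (2 - gamma0) < \<alpha>"
  shows "rho (A_alpha \<alpha> E) < 3 * \<alpha> + (1 - \<alpha>) * adjacency_bound 3"
proof -
  define c where "c = adjacency_bound 3"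
  define P where "P t = t\<^sup>2 - 2 * t - 1" for t :: real
  define \<mu> where "\<mu> = c + 2 * \<alpha> / (1 - \<alpha>)"
  have c: "2.44 < c" "c < 3" using adjacency_bound_3_gt adjacency_bound_less_3 by (simp_all add: c_def)
  have P_pos: "0 < P t" if "2.44 < t" for t using quadratic_pos[OF that] by (simp add: P_def)
  have "2 * (c - 2) / P c < \<mu>"
    using alpha_threshold[OF gamma0_less_2 assms(4,5)] gamma0_eq by (simp add: \<mu>_def c_def P_def)
  moreover have "isCont (\<lambda>t. 2 * (t - 2) / P t) c"
    using P_pos[OF c(1)] unfolding P_def by (intro continuous_intros) auto
  ultimately obtain t where t: "2.44 < t" "t < c" "2 * (t - 2) / P t < \<mu>"
    using isCont_less_left_of c(1) by blast
  define f where
    "f j = (if j = 0 then 1 else if j = 1 then t - 2 else if j = 2 then P t / 2 else 0)" for j :: nat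
  have "P t / 2 \<le> t - 2"
  proof -
    have "(t - 1) * (t - 3) \<le> 0" using t c by (intro mult_nonneg_nonpos) auto
    then show ?thesis by (simp add: P_def power2_eq_square field_simps)
  qed
  then have "antimono f"
    using t c P_pos[OF t(1)] unfolding antimono_iff_le_Suc f_def by auto
  have "rho (A_alpha \<alpha> E) < 3 * \<alpha> + (1 - \<alpha>) * c"
  proof (rule rho_A_alpha_less_level[OF assms(1) _ assms(4) _ \<open>antimono f\<close>])
    show "0 \<le> f j" for j using t P_pos[OF t(1)] by (simp add: f_def)
    show "0 < f j" if "j < kG E" for j using that assms(2) t P_pos[OF t(1)] by (auto simp: f_def)
    show "2 * f 0 + f 1 < c * f 0" using t by (simp add: f_def)
    show "f (j - 1) + 2 * f (Suc j) < c * f j" if "0 < j" "Suc j < kG E" for j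
    proof -
      have "j = 1" using that assms(2) by simp
      have "f 0 + 2 * f 2 = t * (t - 2)" by (simp add: f_def P_def power2_eq_square field_simps)
      also have "\<dots> < c * (t - 2)" using t by (intro mult_strict_right_mono) auto
      finally show ?thesis using \<open>j = 1\<close> by (simp add: f_def numeral_2_eq_2)
    qed
    have "2 * (t - 2) < \<mu> * P t" using t(3) P_pos[OF t(1)] by (simp add: divide_less_eq)
    then have "(1 - \<alpha>) * (t - 2) < (1 - \<alpha>) * \<mu> * (P t / 2)"
      using assms(4) by (simp add: mult.assoc)
    also have "(1 - \<alpha>) * \<mu> = 2 * \<alpha> + (1 - \<alpha>) * c" using assms(4) by (simp add: \<mu>_def field_simps)
    finally show "(1 - \<alpha>) * f (kG E - 2) < (2 * \<alpha> + (1 - \<alpha>) * c) * f (kG E - 1)"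
      using assms(2) by (simp add: f_def)
  qed (use assms in auto)
  then show ?thesis by (simp add: c_def)
qed

lemma rho_A_alpha_less_depth_2:
  assumes "max_degree E = 3" "kG E = 2" "0 < \<alpha>" "\<alpha> < 1" "- delta0 / (2 - delta0) < \<alpha>"
  shows "rho (A_alpha \<alpha> E) < 3 * \<alpha> + (1 - \<alpha>) * adjacency_bound 2"
proof -
  define c where "c = adjacency_bound 2"
  define \<mu> where "\<mu> = c + 2 * \<alpha> / (1 - \<alpha>)"
  have c: "2 < c" "c < 3" using adjacency_bound_2_gt adjacency_bound_less_3 by (simp_all add: c_def)
  have "1 / (c - 2) < \<mu>"
    using alpha_threshold[OF delta0_less_2 assms(4,5)] delta0_eq by (simp add: \<mu>_def c_def)
  moreover have "isCont (\<lambda>t. 1 / (t - 2)) c" using c by (intro continuous_intros) auto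
  ultimately obtain t where t: "2 < t" "t < c" "1 / (t - 2) < \<mu>"
    using isCont_less_left_of c(1) by blast
  define f where "f j = (if j = 0 then 1 else if j = 1 then t - 2 else 0)" for j :: nat
  have "antimono f" using t c unfolding antimono_iff_le_Suc f_def by auto
  have "rho (A_alpha \<alpha> E) < 3 * \<alpha> + (1 - \<alpha>) * c"
  proof (rule rho_A_alpha_less_level[OF assms(1) _ assms(4) _ \<open>antimono f\<close>])
    show "0 \<le> f j" for j using t by (simp add: f_def)
    show "0 < f j" if "j < kG E" for j using that assms(2) t by (auto simp: f_def)
    show "2 * f 0 + f 1 < c * f 0" using t by (simp add: f_def)
    have "1 < \<mu> * (t - 2)" using t by (simp add: divide_less_eq)
    then have "(1 - \<alpha>) * 1 < (1 - \<alpha>) * \<mu> * (t - 2)"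
      using assms(4) by (simp add: mult.assoc)
    also have "(1 - \<alpha>) * \<mu> = 2 * \<alpha> + (1 - \<alpha>) * c" using assms(4) by (simp add: \<mu>_def field_simps)
    finally show "(1 - \<alpha>) * f (kG E - 2) < (2 * \<alpha> + (1 - \<alpha>) * c) * f (kG E - 1)"
      using assms(2) by (simp add: f_def)
  qed (use assms in auto)
  then show ?thesis by (simp add: c_def)
qed

end

theorem mainTheorem12:
  fixes E :: "'a::finite \<Rightarrow> 'a \<Rightarrow> bool" and \<alpha> :: real
  assumes "simple_graph E"
    and "unicyclic E"
    and "max_degree E = 3"
    and "0 < \<alpha>" and "\<alpha> < 1"
    and "(kG E = 3 \<and> \<alpha> > - gamma0 / (2 - gamma0)) \<or> (kG E = 2 \<and> \<alpha> > - delta0 / (2 - delta0))"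
  shows "rho (A_alpha \<alpha> E) < 3 * \<alpha> + 2 * (1 - \<alpha>) * sqrt 2 * cos (pi / (2 * real (kG E) + 1))"
proof -
  interpret unicyclic_graph E using assms(1,2) by unfold_locales
  have "rho (A_alpha \<alpha> E) < 3 * \<alpha> + (1 - \<alpha>) * adjacency_bound (kG E)"
    using assms(6)
    by (elim disjE conjE)
      (simp_all add: rho_A_alpha_less_depth_3[OF assms(3) _ assms(4,5)]
        rho_A_alpha_less_depth_2[OF assms(3) _ assms(4,5)])
  moreover have "(1 - \<alpha>) * adjacency_bound (kG E) = 2 * (1 - \<alpha>) * sqrt 2 * cos (pi / (2 * real (kG E) + 1))"
    unfolding adjacency_bound_def by (simp add: algebra_simps)
  ultimately show ?thesis by simp
qed

end
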